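(* Let $T$ be a countable tree with root $o$, and let $Q=(q(x,y))$ be a stochastic matrix on $T$ with $q(x,y)>0$ iff $x=y^-$. Let $\lambda\in\mathbb{C}\setminus\{0\}$. The formula $$h(x)=\int_{\partial T}K_Q(x,\xi\mid\lambda)\,d\sigma(\xi)=\frac{\lambda^{|x|}}{q^{(|x|)}(o,x)}\,\sigma(\partial T_x),\qquad x\in T,$$ gives a one-to-one correspondence $\sigma\mapsto h$ between complex distributions $\sigma$ on $\{\partial T_x:x\in T\}$ and $\lambda$-harmonic functions $h$ for $Q$, i.e. functions $h:T\to\mathbb{C}$ with $\sum_{y:\,y^-=x}q(x,y)h(y)=\lambda h(x)$ for all $x$, the sum converging absolutely.
   Context: $|x|=d(o,x)$. For $x\ne o$, $x^-$ is the neighbour of $x$ closer to $o$. $T_x=\{w:x\in\pi(o,w)\}$, where $\pi$ denotes geodesics, with $T_o=T$. $\partial T$ is the set of ends (classes of geodesic rays modulo finite initial segments), and $\partial T_x$ is the set of ends with a representative ray in $T_x$. For $\pi(o,x)=[o=x_0,\dots,x_n=x]$, $q^{(n)}(o,x)=q(x_0,x_1)\cdots q(x_{n-1},x_n)$, with $q^{(0)}(o,o)=1$. $K_Q(x,\xi\mid\lambda)=\lambda^{|x|}/q^{(|x|)}(o,x)$ if $x$ lies on the ray $\pi(o,\xi)$, and $0$ otherwise. A complex distribution is $\sigma:\{\partial T_x\}\to\mathbb{C}$ with $\sigma(\partial T_x)=\sum_{y^-=x}\sigma(\partial T_y)$ for all $x$, absolutely convergent. The integral of a function constant on $\partial T_x$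 and $0$ off $\partial T_x$ is that constant times $\sigma(\partial T_x)$. *)

theory Defs
  imports "HOL-Analysis.Analysis"
begin

text \<open>A rooted tree on the (countable) vertex type 'a is given by its root o and the
  predecessor map par (par x = x^- for x \<noteq> o, and by convention par r = r).\<close>

definition rooted_tree :: "'a \<Rightarrow> ('a \<Rightarrow> 'a) \<Rightarrow> bool" where
  "rooted_tree r par \<longleftrightarrow> par r = r \<and> (\<forall>x. \<exists>n. (par ^^ n) x = r)"

definition children :: "'a \<Rightarrow> ('a \<Rightarrow> 'a) \<Rightarrow> 'a \<Rightarrow> 'a set" where
  "children r par x = {y. y \<noteq> r \<and> par y = x}"

definition depth :: "'a \<Rightarrow> ('a \<Rightarrow> 'a) \<Rightarrow> 'a \<Rightarrow> nat" where
  "depth r par x = (LEAST n. (par ^^ n) x = r)"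

definition qpath :: "'a \<Rightarrow> ('a \<Rightarrow> 'a) \<Rightarrow> ('a \<Rightarrow> 'a \<Rightarrow> real) \<Rightarrow> 'a \<Rightarrow> real" where
  "qpath r par q x = (\<Prod>k<depth r par x. q ((par ^^ Suc k) x) ((par ^^ k) x))"

definition nn_transition :: "'a \<Rightarrow> ('a \<Rightarrow> 'a) \<Rightarrow> ('a \<Rightarrow> 'a \<Rightarrow> real) \<Rightarrow> bool" where
  "nn_transition r par q \<longleftrightarrow>
     (\<forall>x y. q x y \<ge> 0) \<and> (\<forall>x. (q x has_sum 1) UNIV) \<and>
     (\<forall>x y. q x y > 0 \<longleftrightarrow> y \<in> children r par x)"

text \<open>Complex distribution: sigma x stands for sigma(\<partial>T_x).\<close>
definition complex_distribution :: "'a \<Rightarrow> ('a \<Rightarrow> 'a) \<Rightarrow> ('a \<Rightarrow> complex) \<Rightarrow> bool" where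
  "complex_distribution r par \<sigma> \<longleftrightarrow>
     (\<forall>x. (\<lambda>y. norm (\<sigma> y)) summable_on children r par x \<and> (\<sigma> has_sum \<sigma> x) (children r par x))"

definition lambda_harmonic ::
  "'a \<Rightarrow> ('a \<Rightarrow> 'a) \<Rightarrow> ('a \<Rightarrow> 'a \<Rightarrow> real) \<Rightarrow> complex \<Rightarrow> ('a \<Rightarrow> complex) \<Rightarrow> bool" where
  "lambda_harmonic r par q lam h \<longleftrightarrow>
     (\<forall>x. (\<lambda>y. norm (complex_of_real (q x y) * h y)) summable_on children r par x \<and>
          ((\<lambda>y. complex_of_real (q x y) * h y) has_sum lam * h x) (children r par x))"

text \<open>K_Q(x,\<xi>|lambda) for \<xi> \<in> \<partial>T_x: lambda^|x| / q^(|x|)(o,x); integrating against sigma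
  gives this constant times sigma(\<partial>T_x).\<close>
definition KQ_const :: "'a \<Rightarrow> ('a \<Rightarrow> 'a) \<Rightarrow> ('a \<Rightarrow> 'a \<Rightarrow> real) \<Rightarrow> complex \<Rightarrow> 'a \<Rightarrow> complex" where
  "KQ_const r par q lam x = lam ^ depth r par x / complex_of_real (qpath r par q x)"

definition poisson_transform ::
  "'a \<Rightarrow> ('a \<Rightarrow> 'a) \<Rightarrow> ('a \<Rightarrow> 'a \<Rightarrow> real) \<Rightarrow> complex \<Rightarrow> ('a \<Rightarrow> complex) \<Rightarrow> 'a \<Rightarrow> complex" where
  "poisson_transform r par q lam \<sigma> x = KQ_const r par q lam x * \<sigma> x"

end

theory Submission
  imports Defs
begin

text \<open>Along each edge from x to a child y the kernel satisfies q(x,y) K(y) = \<lambda> K(x), with K(x) \<noteq> 0.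
  Hence h = K \<sigma> turns the \<lambda>-harmonicity condition at x into the distribution condition
  at x multiplied by the nonzero constant \<lambda> K(x), and division by K inverts the map.\<close>

lemma depth_child:
  assumes "rooted_tree r par" and "y \<in> children r par x"
  shows "depth r par y = Suc (depth r par x)"
proof -
  have y: "y \<noteq> r" "par y = x" using assms(2) by (auto simp: children_def)
  from assms(1) obtain n where "(par ^^ n) y = r" unfolding rooted_tree_def by blast
  then have "(LEAST n. (par ^^ n) y = r) = Suc (LEAST m. (par ^^ Suc m) y = r)"
    by (rule Least_Suc) (use y in simp)
  also have "(\<lambda>m. (par ^^ Suc m) y = r) = (\<lambda>m. (par ^^ m) x = r)"
    using y by (simp add: funpow_Suc_right del: funpow.simps)
  finally show ?thesis unfolding depth_def by simp
qed

lemma qpath_child: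
  assumes "rooted_tree r par" and "y \<in> children r par x"
  shows "qpath r par q y = q x y * qpath r par q x"
  using assms(2)
  unfolding qpath_def depth_child[OF assms] prod.lessThan_Suc_shift
  by (simp add: children_def funpow_Suc_right del: funpow.simps)

lemma qpath_pos:
  assumes "rooted_tree r par" and "nn_transition r par q"
  shows "qpath r par q x > 0"
  unfolding qpath_def
proof (rule prod_pos)
  fix k assume "k \<in> {..<depth r par x}"
  then have "(par ^^ k) x \<noteq> r"
    unfolding depth_def by (auto dest: not_less_Least)
  then have "(par ^^ k) x \<in> children r par ((par ^^ Suc k) x)"
    by (simp add: children_def)
  then show "q ((par ^^ Suc k) x) ((par ^^ k) x) > 0"
    using assms(2) unfolding nn_transition_def by blast
qed

lemma KQ_const_nonzero:
  assumes "rooted_tree r par" and "nn_transition r par q" and "lam \<noteq> 0"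
  shows "KQ_const r par q lam x \<noteq> 0"
  using qpath_pos[OF assms(1,2), of x] assms(3) by (simp add: KQ_const_def)

lemma KQ_const_child:
  assumes "rooted_tree r par" and "nn_transition r par q" and "y \<in> children r par x"
  shows "complex_of_real (q x y) * KQ_const r par q lam y = lam * KQ_const r par q lam x"
proof -
  have "q x y > 0" using assms(2,3) unfolding nn_transition_def by blast
  moreover have "qpath r par q x > 0" by (rule qpath_pos[OF assms(1,2)])
  ultimately show ?thesis
    unfolding KQ_const_def depth_child[OF assms(1,3)] qpath_child[OF assms(1,3)]
    by (simp add: field_simps)
qed

lemma abs_has_sum_cmult_iff:
  fixes f g :: "'a \<Rightarrow> 'b::{real_normed_field, banach}"
  assumes "c \<noteq> 0" and "\<And>y. y \<in> A \<Longrightarrow> f y = c * g y"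
  shows "((\<lambda>y. norm (f y)) summable_on A \<and> (f has_sum c * s) A) \<longleftrightarrow>
         ((\<lambda>y. norm (g y)) summable_on A \<and> (g has_sum s) A)"
proof -
  have "(\<lambda>y. norm (f y)) summable_on A \<longleftrightarrow> (\<lambda>y. norm c * norm (g y)) summable_on A"
    using assms(2) by (intro summable_on_cong) (simp add: norm_mult)
  also have "\<dots> \<longleftrightarrow> (\<lambda>y. norm (g y)) summable_on A"
    using assms(1) by (simp add: summable_on_cmult_right')
  moreover have "(f has_sum c * s) A \<longleftrightarrow> ((\<lambda>y. c * g y) has_sum c * s) A"
    using assms(2) by (intro has_sum_cong) simp
  moreover have "\<dots> \<longleftrightarrow> (g has_sum s) A"
    using assms(1) by (simp add: has_sum_cmult_right_iff)
  ultimately show ?thesis by simp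
qed

lemma lambda_harmonic_poisson_transform_iff:
  assumes "rooted_tree r par" and "nn_transition r par q" and "lam \<noteq> 0"
  shows "lambda_harmonic r par q lam (poisson_transform r par q lam \<sigma>) \<longleftrightarrow>
         complex_distribution r par \<sigma>"
proof -
  let ?K = "KQ_const r par q lam"
  have "((\<lambda>y. norm (complex_of_real (q x y) * (?K y * \<sigma> y))) summable_on children r par x \<and>
         ((\<lambda>y. complex_of_real (q x y) * (?K y * \<sigma> y)) has_sum (lam * ?K x) * \<sigma> x)
           (children r par x)) \<longleftrightarrow>
        ((\<lambda>y. norm (\<sigma> y)) summable_on children r par x \<and> (\<sigma> has_sum \<sigma> x) (children r par x))"
    for x
  proof (rule abs_has_sum_cmult_iff)
    show "lam * ?K x \<noteq> 0" using assms(3) KQ_const_nonzero[OF assms] by simp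
    show "complex_of_real (q x y) * (?K y * \<sigma> y) = lam * ?K x * \<sigma> y"
      if "y \<in> children r par x" for y
      using KQ_const_child[OF assms(1,2) that, of lam] by (simp add: mult.assoc[symmetric])
  qed
  then show ?thesis
    unfolding complex_distribution_def lambda_harmonic_def poisson_transform_def
    by (simp add: mult.assoc)
qed

theorem lemma6p1:
  fixes r :: "'a::countable" and par :: "'a \<Rightarrow> 'a"
    and q :: "'a \<Rightarrow> 'a \<Rightarrow> real" and lam :: complex
  assumes "rooted_tree r par"
    and "nn_transition r par q"
    and "lam \<noteq> 0"
  shows "bij_betw (poisson_transform r par q lam)
           {\<sigma>. complex_distribution r par \<sigma>}
           {h. lambda_harmonic r par q lam h}"
proof (rule bij_betw_byWitness[where f' = "\<lambda>h x. h x / KQ_const r par q lam x"])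
  note nonzero = KQ_const_nonzero[OF assms] and iff = lambda_harmonic_poisson_transform_iff[OF assms]
  have inverse: "poisson_transform r par q lam (\<lambda>x. h x / KQ_const r par q lam x) = h" for h
    using nonzero by (simp add: poisson_transform_def fun_eq_iff)
  then show "\<forall>h\<in>{h. lambda_harmonic r par q lam h}.
      poisson_transform r par q lam (\<lambda>x. h x / KQ_const r par q lam x) = h"
    by blast
  show "\<forall>\<sigma>\<in>{\<sigma>. complex_distribution r par \<sigma>}.
      (\<lambda>x. poisson_transform r par q lam \<sigma> x / KQ_const r par q lam x) = \<sigma>"
    using nonzero by (simp add: poisson_transform_def)
  show "poisson_transform r par q lam ` {\<sigma>. complex_distribution r par \<sigma>}
      \<subseteq> {h. lambda_harmonic r par q lam h}"
    using iff by auto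
  show "(\<lambda>h x. h x / KQ_const r par q lam x) ` {h. lambda_harmonic r par q lam h}
      \<subseteq> {\<sigma>. complex_distribution r par \<sigma>}"
  proof safe
    fix h assume "lambda_harmonic r par q lam h"
    then show "complex_distribution r par (\<lambda>x. h x / KQ_const r par q lam x)"
      unfolding iff[symmetric] inverse .
  qed
qed

end
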